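(* If $x\in(-1,1)$ is irrational then for each $r\in\{0,1\}$ and each $y\in\overline{\mathbb{R}}$ with $|y|\in[\pi/2,+\infty]$ there exists a sequence $n_j$ such that $n_j\equiv r \pmod 2$ for all $j$ and $\lim_{j\to\infty}D_{n_j}(x)/n_j=y$.
   Context: Nodes: $x_{k,n}:=2k/n-1$, $k=0,\dots,n$; $D_n(x)=\sum_{k=0}^n(-1)^k\frac{1}{x-x_{k,n}}$. $\overline{\mathbb{R}}=\mathbb{R}\cup\{\pm\infty\}$ is the two-point compactification of $\mathbb{R}$. A sequence $n_j$ is a strictly increasing map $\mathbb{N}\to\mathbb{N}$. *)

theory Defs
  imports "HOL-Analysis.Analysis" "HOL-Library.Extended_Real"
begin

definition node :: "nat \<Rightarrow> nat \<Rightarrow> real" where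
  "node k n = 2 * real k / real n - 1"

definition D :: "nat \<Rightarrow> real \<Rightarrow> real" where
  "D n x = (\<Sum>k = 0..n. (-1) ^ k * (1 / (x - node k n)))"

end

theory Submission
  imports Defs
begin

text \<open>
  Put \<open>c = (x + 1) / 2\<close> and split \<open>n c = m + t\<close> with \<open>m\<close> an integer and \<open>0 < t < 1\<close>.
  Rescaling the nodes and reading the sum outwards from the pole nearest to \<open>x\<close> gives
  \<open>D\<^sub>n(x) / n = (-1)\<^sup>m (P\<^sub>m\<^sub>+\<^sub>1(t) + P\<^sub>n\<^sub>-\<^sub>m(1 - t)) / 2\<close>, where \<open>P\<^sub>L\<close> are the partial sums
  of the alternating series \<open>A(t) = \<Sum>\<^sub>i (-1)\<^sup>i / (t + i)\<close>. By the Leibniz tail bound,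
  \<open>D\<^sub>n(x) / n\<close> is therefore within \<open>O(1/n)\<close> of \<open>(-1)\<^sup>m g(t) / 2\<close> with \<open>g(t) = A(t) + A(1 - t)\<close>.
  As \<open>c\<close> is irrational, the multiples \<open>n c\<close> with \<open>n\<close> of a fixed parity are dense modulo 2,
  so both the parity of \<open>m\<close> and the fractional part \<open>t\<close> can be prescribed approximately.
  Since \<open>g\<close> is continuous on \<open>(0, 1)\<close>, equals \<open>\<pi>\<close> at \<open>1/2\<close> and blows up at \<open>0\<close>, every real
  \<open>v\<close> with \<open>|v| \<ge> \<pi>/2\<close> is a limit point of \<open>D\<^sub>n(x) / n\<close> along \<open>n \<equiv> r (mod 2)\<close>, and so
  are \<open>\<plusminus>\<infinity>\<close>; a diagonal choice extracts the subsequence.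
\<close>

lemma strict_mono_choice:
  fixes Q :: "nat \<Rightarrow> nat \<Rightarrow> bool"
  assumes "\<And>j M. \<exists>n\<ge>M. Q j n"
  shows "\<exists>\<sigma>. strict_mono \<sigma> \<and> (\<forall>j. Q j (\<sigma> j))"
proof -
  define \<sigma> where "\<sigma> = rec_nat (SOME n. Q 0 n) (\<lambda>j m. SOME n. n > m \<and> Q (Suc j) n)"
  have "Q 0 (\<sigma> 0)"
    unfolding \<sigma>_def using someI_ex[of "Q 0"] assms[where j = 0 and M = 0] by auto
  moreover have "\<sigma> (Suc j) > \<sigma> j \<and> Q (Suc j) (\<sigma> (Suc j))" for j
  proof -
    have "\<exists>n. n > \<sigma> j \<and> Q (Suc j) n"
      using assms[where j = "Suc j" and M = "Suc (\<sigma> j)"] by (auto simp: Suc_le_eq)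
    then show ?thesis
      using someI_ex[of "\<lambda>n. n > \<sigma> j \<and> Q (Suc j) n"] by (simp add: \<sigma>_def)
  qed
  ultimately show ?thesis
    unfolding strict_mono_Suc_iff by (metis not0_implies_Suc)
qed

lemma frequently_nhds_imp_subseq_tendsto:
  fixes f :: "nat \<Rightarrow> 'a::first_countable_topology"
  assumes "\<And>U. open U \<Longrightarrow> l \<in> U \<Longrightarrow> \<exists>\<^sub>F n in sequentially. P n \<and> f n \<in> U"
  shows "\<exists>\<sigma>. strict_mono \<sigma> \<and> (\<forall>j. P (\<sigma> j)) \<and> (f \<circ> \<sigma>) \<longlonglongrightarrow> l"
proof -
  obtain A where A: "\<And>i. open (A i)" "\<And>i. l \<in> A i"
    "\<And>S. open S \<Longrightarrow> l \<in> S \<Longrightarrow> eventually (\<lambda>i. A i \<subseteq> S) sequentially"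
    using countable_basis_at_decseq by blast
  have "\<exists>n\<ge>M. P n \<and> f n \<in> A j" for j M
    using assms[OF A(1,2)] unfolding frequently_sequentially by blast
  then obtain \<sigma> where \<sigma>: "strict_mono \<sigma>" "\<And>j. P (\<sigma> j) \<and> f (\<sigma> j) \<in> A j"
    using strict_mono_choice[of "\<lambda>j n. P n \<and> f n \<in> A j"] by blast
  have "(f \<circ> \<sigma>) \<longlonglongrightarrow> l"
  proof (rule topological_tendstoI)
    fix S assume "open S" "l \<in> S"
    from A(3)[OF this] show "eventually (\<lambda>j. (f \<circ> \<sigma>) j \<in> S) sequentially"
      by (rule eventually_mono) (use \<sigma> in auto)
  qed
  with \<sigma> show ?thesis by blast
qed

lemma alternating_series_tail_le:
  fixes a :: "nat \<Rightarrow> real"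
  assumes "a \<longlonglongrightarrow> 0" "\<And>n. 0 \<le> a n" "\<And>n. a (Suc n) \<le> a n"
  shows "\<bar>(\<Sum>i. (-1)^i * a i) - (\<Sum>i<L. (-1)^i * a i)\<bar> \<le> a L"
proof -
  note Leibniz = summable_Leibniz'[of a, OF assms]
  show ?thesis
  proof (cases "even L")
    case True
    then obtain n where "L = 2 * n" by blast
    then show ?thesis using Leibniz(2)[of n] Leibniz(4)[of n] by simp
  next
    case False
    then obtain n where "L = 2 * n + 1" using oddE by blast
    then show ?thesis using Leibniz(2)[of "Suc n"] Leibniz(4)[of n] by simp
  qed
qed

lemma shifted_reciprocals_Leibniz:
  fixes t :: real
  assumes "t > 0"
  shows "(\<lambda>i. 1 / (t + real i)) \<longlonglongrightarrow> 0" "0 \<le> 1 / (t + real n)"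
    "1 / (t + real (Suc n)) \<le> 1 / (t + real n)"
proof -
  have "filterlim (\<lambda>i. t + real i) at_top sequentially"
    by (rule filterlim_tendsto_add_at_top[OF tendsto_const filterlim_real_sequentially])
  then show "(\<lambda>i. 1 / (t + real i)) \<longlonglongrightarrow> 0"
    by (intro tendsto_divide_0[OF tendsto_const] filterlim_at_top_imp_at_infinity)
qed (use assms in \<open>auto simp: frac_le\<close>)

definition alt_recip_partial :: "nat \<Rightarrow> real \<Rightarrow> real" where
  "alt_recip_partial L t = (\<Sum>i<L. (-1)^i / (t + real i))"

definition alt_recip_sum :: "real \<Rightarrow> real" where
  "alt_recip_sum t = (\<Sum>i. (-1)^i / (t + real i))"

lemma alt_recip_partial_approx:
  "t > 0 \<Longrightarrow> \<bar>alt_recip_partial L t - alt_recip_sum t\<bar> \<le> 1 / (t + real L)"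
  using alternating_series_tail_le[where a = "\<lambda>i. 1 / (t + real i)", OF shifted_reciprocals_Leibniz]
  by (simp add: alt_recip_sum_def alt_recip_partial_def abs_minus_commute)

lemma alt_recip_sum_nonneg: "t > 0 \<Longrightarrow> 0 \<le> alt_recip_sum t"
  using summable_Leibniz'(2)[where a = "\<lambda>i. 1 / (t + real i)", OF shifted_reciprocals_Leibniz, of 0]
  by (simp add: alt_recip_sum_def)

lemma alt_recip_sum_ge:
  assumes "t > 0"
  shows "1 / t - 1 \<le> alt_recip_sum t"
proof -
  have "1 / t - 1 / (t + 1) \<le> alt_recip_sum t"
    using summable_Leibniz'(2)[where a = "\<lambda>i. 1 / (t + real i)", OF shifted_reciprocals_Leibniz[OF assms], of 1]
    by (simp add: alt_recip_sum_def numeral_2_eq_2)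
  moreover have "1 / (t + 1) \<le> 1" using assms by (simp add: divide_simps)
  ultimately show ?thesis by linarith
qed

lemma alt_recip_sum_half: "alt_recip_sum (1/2) = pi / 2"
proof -
  have summand: "(-1)^i / (1/2 + real i) = 2 * ((-1)^i * 1 / real (i * 2 + 1))" for i :: nat
    by (simp add: divide_simps)
  have "summable (\<lambda>i. 2 * ((-1)^i * 1 / real (i * 2 + 1)))"
    using summable_Leibniz'(1)[where a = "\<lambda>i. 1 / (1/2 + real i)", OF shifted_reciprocals_Leibniz]
    by (simp add: summand)
  then have "summable (\<lambda>i. (-1)^i * 1 / real (i * 2 + 1))"
    by (simp only: summable_cmult_iff) simp
  then have "alt_recip_sum (1/2) = 2 * (pi / 4)"
    unfolding pi_series alt_recip_sum_def summand by (rule suminf_mult)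
  then show ?thesis by simp
qed

lemma continuous_on_alt_recip_sum: "continuous_on {0<..} alt_recip_sum"
proof (rule uniform_limit_theorem)
  show "\<forall>\<^sub>F L in sequentially. continuous_on {0<..} (alt_recip_partial L)"
    unfolding alt_recip_partial_def by (intro always_eventually allI continuous_intros) auto
  show "uniform_limit {0<..} alt_recip_partial alt_recip_sum sequentially"
    unfolding uniform_limit_iff
  proof (intro allI impI)
    fix e :: real assume "e > 0"
    then obtain N :: nat where N: "N > 0" "1 / real N < e"
      by (metis gr_zeroI inverse_eq_divide real_arch_inverse)
    show "\<forall>\<^sub>F L in sequentially. \<forall>t\<in>{0<..}. dist (alt_recip_partial L t) (alt_recip_sum t) < e"
    proof (rule eventually_sequentiallyI[of N], intro ballI)
      fix L and t :: real assume "N \<le> L" "t \<in> {0<..}"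
      then have "1 / (t + real L) \<le> 1 / real N"
        using N by (simp add: frac_le)
      then have "dist (alt_recip_partial L t) (alt_recip_sum t) \<le> 1 / real N"
        using alt_recip_partial_approx[of t L] \<open>t \<in> {0<..}\<close> by (simp add: dist_real_def)
      with N show "dist (alt_recip_partial L t) (alt_recip_sum t) < e" by linarith
    qed
  qed
qed auto

text \<open>In fact \<open>alt_recip_sym t = \<pi> / sin (\<pi> t)\<close>; only its continuity, its value at \<open>1/2\<close>
  and its blow-up at \<open>0\<close> are needed.\<close>

definition alt_recip_sym :: "real \<Rightarrow> real" where
  "alt_recip_sym t = alt_recip_sum t + alt_recip_sum (1 - t)"

lemma continuous_on_alt_recip_sym: "continuous_on {0<..<1} alt_recip_sym"
proof -
  have "continuous_on {0<..<1} (\<lambda>t. alt_recip_sum (1 - t))"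
    by (rule continuous_on_compose2[OF continuous_on_alt_recip_sum]) (intro continuous_intros, auto)
  moreover have "continuous_on {0<..<1} alt_recip_sum"
    by (rule continuous_on_subset[OF continuous_on_alt_recip_sum]) auto
  ultimately show ?thesis
    unfolding alt_recip_sym_def by (intro continuous_intros)
qed

lemma alt_recip_sym_ge: "0 < t \<Longrightarrow> t < 1 \<Longrightarrow> 1 / t - 1 \<le> alt_recip_sym t"
  using alt_recip_sum_ge[of t] alt_recip_sum_nonneg[of "1 - t"]
  unfolding alt_recip_sym_def by linarith

lemma alt_recip_sym_attains:
  assumes "pi \<le> v"
  obtains t where "0 < t" "t \<le> 1/2" "alt_recip_sym t = v"
proof -
  define t0 where "t0 = 1 / (v + 2)"
  have t0: "0 < t0" "t0 \<le> 1/2"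
    using assms pi_gt3 by (auto simp: t0_def divide_simps)
  have "v \<le> alt_recip_sym t0"
    using alt_recip_sym_ge[of t0] t0 by (simp add: t0_def)
  moreover have "alt_recip_sym (1/2) \<le> v"
    using assms by (simp add: alt_recip_sym_def alt_recip_sum_half)
  moreover have "continuous_on {t0..1/2} alt_recip_sym"
    by (rule continuous_on_subset[OF continuous_on_alt_recip_sym]) (use t0 in auto)
  ultimately obtain t where "t0 \<le> t" "t \<le> 1/2" "alt_recip_sym t = v"
    using IVT2'[of alt_recip_sym "1/2" v t0] t0 by auto
  with t0 show ?thesis by (intro that) auto
qed

lemma alt_sum_reflect:
  fixes t :: real
  assumes "real m + t = s" "m \<le> n"
  shows "(\<Sum>k=0..n. (-1)^k / (s - real k))
           = (-1)^m * (alt_recip_partial (m + 1) t + alt_recip_partial (n - m) (1 - t))"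
proof -
  define f where "f k = (-1)^k / (s - real k)" for k
  have "(\<Sum>k=0..n. f k) = (\<Sum>k=0..m. f k) + (\<Sum>k=m+1..m+(n-m). f k)"
    using assms(2) sum.ub_add_nat[of 0 m f "n - m"] by simp
  also have "(\<Sum>k=0..m. f k) = (\<Sum>i=0..m. f (m - i))"
    using sum.atLeastAtMost_rev[of f 0 m] by simp
  also have "\<dots> = (-1)^m * alt_recip_partial (m + 1) t"
    unfolding alt_recip_partial_def sum_distrib_left
  proof (rule sum.cong)
    fix i assume "i \<in> {..<m+1}"
    then have i: "i \<le> m" by simp
    have "(-1::real)^(m - i) = (-1)^m * (-1)^i"
      using i by (cases "even i") (simp_all add: power_diff)
    moreover have "s - real (m - i) = t + real i"
      using i assms(1) by simp
    ultimately show "f (m - i) = (-1)^m * ((-1)^i / (t + real i))"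
      by (simp add: f_def)
  qed (simp add: atLeast0AtMost lessThan_Suc_atMost)
  also have "(\<Sum>k=m+1..m+(n-m). f k) = (\<Sum>k=0+(m+1)..<(n-m)+(m+1). f k)"
    by (intro sum.cong) auto
  also have "\<dots> = (\<Sum>i<n-m. f (m + 1 + i))"
    unfolding sum.shift_bounds_nat_ivl by (simp add: atLeast0LessThan add.commute)
  also have "\<dots> = (-1)^m * alt_recip_partial (n - m) (1 - t)"
    unfolding alt_recip_partial_def sum_distrib_left
  proof (rule sum.cong[OF refl])
    fix i
    have "s - real (m + 1 + i) = - ((1 - t) + real i)" using assms(1) by simp
    then have "f (m + 1 + i) = - ((-1)^(m + 1 + i) / ((1 - t) + real i))"
      by (simp only: f_def divide_minus_right)
    then show "f (m + 1 + i) = (-1)^m * ((-1)^i / ((1 - t) + real i))"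
      by (simp add: power_add)
  qed
  finally show ?thesis by (simp add: f_def distrib_left)
qed

lemma D_div_eq_rescaled:
  assumes "n > 0"
  shows "D n x / real n = (\<Sum>k=0..n. (-1)^k / (real n * ((x + 1) / 2) - real k)) / 2"
proof -
  have "(-1)^k / (x - node k n) = (real n / 2) * ((-1)^k / (real n * ((x + 1) / 2) - real k))" for k
  proof -
    have "x - node k n = (real n * ((x + 1) / 2) - real k) / (real n / 2)"
      using assms by (simp add: node_def field_simps)
    then show ?thesis by (simp add: ac_simps)
  qed
  then have "D n x = (real n / 2) * (\<Sum>k=0..n. (-1)^k / (real n * ((x + 1) / 2) - real k))"
    unfolding D_def sum_distrib_left by simp
  with assms show ?thesis by simp
qed

lemma D_div_near_alt_recip_sym:
  fixes x t :: real
  defines "c \<equiv> (x + 1) / 2"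
  assumes c: "0 < c" "c < 1" and "n > 0" and t: "0 < t" "t < 1"
    and nc: "real n * c = real m + t"
  shows "\<bar>D n x / real n - (-1)^m * alt_recip_sym t / 2\<bar> \<le> 1 / (real n * c) + 1 / (real n * (1 - c))"
proof -
  have mn: "m \<le> n"
    using nc c t mult_strict_left_mono[of c 1 "real n"] \<open>n > 0\<close> by simp
  have D: "D n x / real n = (-1)^m * (alt_recip_partial (m + 1) t + alt_recip_partial (n - m) (1 - t)) / 2"
    unfolding D_div_eq_rescaled[OF \<open>n > 0\<close>] alt_sum_reflect[OF nc[unfolded c_def, symmetric] mn] ..
  define e1 where "e1 = alt_recip_partial (m + 1) t - alt_recip_sum t"
  define e2 where "e2 = alt_recip_partial (n - m) (1 - t) - alt_recip_sum (1 - t)"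
  have "\<bar>e1\<bar> \<le> 1 / (t + real (m + 1))"
    unfolding e1_def by (rule alt_recip_partial_approx[OF t(1)])
  also have "\<dots> \<le> 1 / (real n * c)"
    using nc c t \<open>n > 0\<close> by (intro divide_left_mono) auto
  finally have e1: "\<bar>e1\<bar> \<le> 1 / (real n * c)" .
  have "\<bar>e2\<bar> \<le> 1 / ((1 - t) + real (n - m))"
    unfolding e2_def by (rule alt_recip_partial_approx) (use t in simp)
  also have "\<dots> \<le> 1 / (real n * (1 - c))"
  proof (rule divide_left_mono)
    show "real n * (1 - c) \<le> (1 - t) + real (n - m)"
      using nc mn by (simp add: algebra_simps)
    show "0 < ((1 - t) + real (n - m)) * (real n * (1 - c))"
      using c t \<open>n > 0\<close> by (simp add: add_pos_nonneg)
  qed simp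
  finally have e2: "\<bar>e2\<bar> \<le> 1 / (real n * (1 - c))" .
  have "D n x / real n - (-1)^m * alt_recip_sym t / 2 = (-1)^m * (e1 + e2) / 2"
    unfolding D e1_def e2_def alt_recip_sym_def by (simp add: field_simps)
  moreover have "\<bar>(-1)^m * (e1 + e2) / 2\<bar> = \<bar>e1 + e2\<bar> / 2"
    by (simp add: abs_mult power_abs)
  ultimately have "\<bar>D n x / real n - (-1)^m * alt_recip_sym t / 2\<bar> = \<bar>e1 + e2\<bar> / 2"
    by (simp only:)
  with e1 e2 abs_triangle_ineq[of e1 e2] abs_ge_zero[of e1] abs_ge_zero[of e2]
  show ?thesis by linarith
qed

lemma irrational_multiple_near_even:
  fixes c \<beta> \<epsilon> :: real
  assumes "c \<notin> \<rat>" "\<epsilon> > 0" "r \<in> {0, 1}"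
  shows "\<exists>n\<ge>M. n mod 2 = r \<and> (\<exists>h::int. \<bar>real n * c - 2 * of_int h - \<beta>\<bar> < \<epsilon>)"
proof -
  \<comment> \<open>Approximate with \<open>n = 2 k (M + 1) + r\<close>, using density of \<open>k \<theta>\<close> modulo 1.\<close>
  define \<theta> where "\<theta> = real (M + 1) * c"
  have "\<theta> \<notin> \<rat>"
  proof
    assume "\<theta> \<in> \<rat>"
    then have "\<theta> / real (M + 1) \<in> \<rat>" by simp
    with assms(1) show False by (simp add: \<theta>_def)
  qed
  then obtain h k where k: "k > 0" "\<bar>of_int k * \<theta> - of_int h - (\<beta> - real r * c) / 2\<bar> < \<epsilon> / 2"
    using sequence_of_fractional_parts_is_dense[of \<theta> "\<epsilon> / 2" "(\<beta> - real r * c) / 2"] assms(2)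
    by (metis half_gt_zero)
  define n where "n = 2 * (nat k * (M + 1)) + r"
  have "real n * c - 2 * of_int h - \<beta> = 2 * (of_int k * \<theta> - of_int h - (\<beta> - real r * c) / 2)"
    using k(1) by (simp add: n_def \<theta>_def field_simps)
  then have "\<bar>real n * c - 2 * of_int h - \<beta>\<bar> = 2 * \<bar>of_int k * \<theta> - of_int h - (\<beta> - real r * c) / 2\<bar>"
    by (simp only: abs_mult abs_numeral)
  also have "\<dots> < 2 * (\<epsilon> / 2)"
    using k(2) by (rule mult_strict_left_mono) simp
  finally have "\<bar>real n * c - 2 * of_int h - \<beta>\<bar> < \<epsilon>" by simp
  moreover have "n \<ge> M"
  proof -
    have "1 \<le> nat k" using k(1) by simp
    then have "M \<le> nat k * (M + 1)" using mult_le_mono1[of 1 "nat k" "M + 1"] by simp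
    then show ?thesis by (simp add: n_def)
  qed
  moreover have "n mod 2 = r"
    using assms(3) by (auto simp: n_def)
  ultimately show ?thesis by blast
qed

lemma D_div_approaches_alt_recip_sym:
  fixes x t0 \<epsilon> \<eta> :: real
  assumes x: "x \<in> {-1<..<1}" "x \<notin> \<rat>" and r: "r \<in> {0, 1}" and p: "p \<in> {0, 1}"
    and \<epsilon>: "\<epsilon> > 0" "0 < t0 - \<epsilon>" "t0 + \<epsilon> < 1" and "\<eta> > 0"
  shows "\<exists>n\<ge>M. n mod 2 = r \<and>
           (\<exists>t. \<bar>t - t0\<bar> < \<epsilon> \<and> \<bar>D n x / real n - (-1)^p * alt_recip_sym t / 2\<bar> < \<eta>)"
proof -
  define c where "c = (x + 1) / 2"
  have c: "0 < c" "c < 1" using x by (auto simp: c_def)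
  have "c \<notin> \<rat>"
  proof
    assume "c \<in> \<rat>"
    then have "2 * c - 1 \<in> \<rat>" by simp
    moreover have "2 * c - 1 = x" by (simp add: c_def field_simps)
    ultimately show False using x by simp
  qed
  have "(\<lambda>n. 1 / (real n * c) + 1 / (real n * (1 - c))) = (\<lambda>n. (1 / c + 1 / (1 - c)) * (1 / real n))"
  proof
    fix n :: nat
    show "1 / (real n * c) + 1 / (real n * (1 - c)) = (1 / c + 1 / (1 - c)) * (1 / real n)"
      using c by (cases "n = 0") (simp_all add: field_simps)
  qed
  moreover have "(\<lambda>n. (1 / c + 1 / (1 - c)) * (1 / real n)) \<longlonglongrightarrow> 0"
    by (rule tendsto_mult_right_zero[OF lim_inverse_n'])
  ultimately have "(\<lambda>n. 1 / (real n * c) + 1 / (real n * (1 - c))) \<longlonglongrightarrow> 0"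
    by simp
  from order_tendstoD(2)[OF this \<open>\<eta> > 0\<close>]
  obtain M1 where M1: "\<And>n. n \<ge> M1 \<Longrightarrow> 1 / (real n * c) + 1 / (real n * (1 - c)) < \<eta>"
    unfolding eventually_sequentially by blast
  obtain n h where n: "n \<ge> max M (max M1 1)" "n mod 2 = r"
    and h: "\<bar>real n * c - 2 * of_int h - (real p + t0)\<bar> < \<epsilon>"
    using irrational_multiple_near_even[OF \<open>c \<notin> \<rat>\<close> \<epsilon>(1) r] by blast
  have "0 < real n * c" using n(1) c by simp
  with h \<epsilon> p have "h \<ge> 0" by auto
  \<comment> \<open>The even offset \<open>2 h\<close> makes \<open>m\<close> have the parity of \<open>p\<close>, hence \<open>(-1)\<^sup>m = (-1)\<^sup>p\<close>.\<close>
  define m where "m = 2 * nat h + p"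
  define t where "t = real n * c - real m"
  have t: "\<bar>t - t0\<bar> < \<epsilon>"
    using h \<open>h \<ge> 0\<close> by (simp add: t_def m_def algebra_simps)
  have "\<bar>D n x / real n - (-1)^m * alt_recip_sym t / 2\<bar> \<le> 1 / (real n * c) + 1 / (real n * (1 - c))"
    using D_div_near_alt_recip_sym[of x n t m] c n(1) t \<epsilon> by (simp add: c_def t_def)
  also have "\<dots> < \<eta>" using M1 n(1) by simp
  finally show ?thesis
    using n t by (auto simp: m_def power_add)
qed

lemma D_div_near_value:
  fixes x v e :: real
  assumes x: "x \<in> {-1<..<1}" "x \<notin> \<rat>" and r: "r \<in> {0, 1}"
    and v: "pi / 2 \<le> \<bar>v\<bar>" and "e > 0"
  shows "\<exists>n\<ge>M. n mod 2 = r \<and> \<bar>D n x / real n - v\<bar> < e"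
proof -
  obtain t0 where t0: "0 < t0" "t0 \<le> 1/2" "alt_recip_sym t0 = 2 * \<bar>v\<bar>"
    using alt_recip_sym_attains[of "2 * \<bar>v\<bar>"] v by auto
  define p :: nat where "p = (if 0 \<le> v then 0 else 1)"
  have v_eq: "v = (-1)^p * alt_recip_sym t0 / 2"
    using t0(3) by (simp add: p_def)
  obtain \<delta> where \<delta>: "\<delta> > 0"
    "\<And>t. t \<in> {0<..<1} \<Longrightarrow> dist t t0 < \<delta> \<Longrightarrow> dist (alt_recip_sym t) (alt_recip_sym t0) < e"
    using continuous_on_alt_recip_sym \<open>e > 0\<close> t0(1,2) unfolding continuous_on_iff by force
  define \<epsilon> where "\<epsilon> = min \<delta> (t0 / 2)"
  have "p \<in> {0, 1}" "\<epsilon> > 0" "0 < t0 - \<epsilon>" "t0 + \<epsilon> < 1"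
    using \<delta>(1) t0 by (auto simp: p_def \<epsilon>_def)
  then obtain n t where n: "n \<ge> M" "n mod 2 = r" and t: "\<bar>t - t0\<bar> < \<epsilon>"
    and approx: "\<bar>D n x / real n - (-1)^p * alt_recip_sym t / 2\<bar> < e / 2"
    using D_div_approaches_alt_recip_sym[OF x r, of p \<epsilon> t0 "e / 2" M] \<open>e > 0\<close> by auto
  have "\<bar>t - t0\<bar> < \<delta>" "\<bar>t - t0\<bar> < t0 / 2"
    using t by (simp_all add: \<epsilon>_def)
  moreover from this(2)[unfolded abs_less_iff] t0(2) have "t \<in> {0<..<1}"
    by simp
  ultimately have "\<bar>alt_recip_sym t - alt_recip_sym t0\<bar> < e"
    using \<delta>(2)[of t] by (simp add: dist_real_def)
  then have "dist v ((-1)^p * alt_recip_sym t / 2) < e / 2"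
    unfolding v_eq dist_real_def
    by (simp add: abs_mult power_abs abs_minus_commute flip: diff_divide_distrib right_diff_distrib)
  moreover have "dist (D n x / real n) ((-1)^p * alt_recip_sym t / 2) < e / 2"
    using approx by (simp only: dist_real_def)
  ultimately have "dist (D n x / real n) v < e"
    by (metis dist_triangle_half_l)
  with n show ?thesis by (auto simp: dist_real_def)
qed

lemma D_div_frequently_in_nhds:
  fixes x :: real and y :: ereal
  assumes x: "x \<in> {-1<..<1}" "x \<notin> \<rat>" and r: "r \<in> {0, 1}"
    and y: "ereal (pi / 2) \<le> \<bar>y\<bar>" and U: "open U" "y \<in> U"
  shows "\<exists>\<^sub>F n in sequentially. n mod 2 = r \<and> ereal (D n x / real n) \<in> U"
  unfolding frequently_sequentially
proof
  fix M
  note near = D_div_near_value[OF x r]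
  show "\<exists>n\<ge>M. n mod 2 = r \<and> ereal (D n x / real n) \<in> U"
  proof (cases y)
    case (real v)
    have "v \<in> ereal -` U" using U(2) real by simp
    with open_ereal_vimage[OF U(1)] obtain e where e: "e > 0" "ball v e \<subseteq> ereal -` U"
      by (rule openE)
    from near[of v e M] y real e(1) obtain n where n: "n \<ge> M" "n mod 2 = r"
      and "\<bar>D n x / real n - v\<bar> < e" by auto
    then have "D n x / real n \<in> ball v e" by (simp add: dist_real_def abs_minus_commute)
    with e(2) n show ?thesis by blast
  next
    case PInf
    then obtain R where R: "{ereal R<..} \<subseteq> U" using open_PInfty U by blast
    have "pi / 2 \<le> \<bar>max (R + 1) (pi / 2)\<bar>"
      by (rule order_trans[OF max.cobounded2 abs_ge_self])
    from near[OF this, of 1 M] obtain n where n: "n \<ge> M" "n mod 2 = r"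
      and "\<bar>D n x / real n - max (R + 1) (pi / 2)\<bar> < 1" by auto
    then have "ereal (D n x / real n) \<in> U" using R by auto
    with n show ?thesis by blast
  next
    case MInf
    then obtain R where R: "{..<ereal R} \<subseteq> U" using open_MInfty U by blast
    have "pi / 2 \<le> \<bar>min (R - 1) (- pi / 2)\<bar>"
      by (rule order_trans[OF _ abs_ge_minus_self]) (auto simp: min_def)
    from near[OF this, of 1 M] obtain n where n: "n \<ge> M" "n mod 2 = r"
      and "\<bar>D n x / real n - min (R - 1) (- pi / 2)\<bar> < 1" by auto
    then have "ereal (D n x / real n) \<in> U" using R by auto
    with n show ?thesis by blast
  qed
qed

theorem lemma7:
  fixes x :: real and r :: nat and y :: ereal
  assumes "x \<in> {-1<..<1}" and "x \<notin> \<rat>"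
    and "r \<in> {0, 1}"
    and "\<bar>y\<bar> \<ge> ereal (pi / 2)"
  shows "\<exists>n :: nat \<Rightarrow> nat. strict_mono n \<and> (\<forall>j. n j mod 2 = r) \<and>
           ((\<lambda>j. ereal (D (n j) x / real (n j))) \<longlonglongrightarrow> y)"
proof -
  have "\<exists>\<sigma>. strict_mono \<sigma> \<and> (\<forall>j. \<sigma> j mod 2 = r) \<and> ((\<lambda>n. ereal (D n x / real n)) \<circ> \<sigma>) \<longlonglongrightarrow> y"
    using D_div_frequently_in_nhds[OF assms(1-3)] assms(4)
    by (intro frequently_nhds_imp_subseq_tendsto) blast
  then show ?thesis by (simp add: comp_def)
qed

end
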